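(* Let $A$ be a finite-dimensional commutative Frobenius algebra over a field with $\dim(A)>1$. Suppose $K$ and $L$ are arrows of $\mathbf{2Cob}$ with $K\neq L$ (as arrows of $\mathbf{2Cob}$) but $F_AK=F_AL$ (as linear maps, in particular with equal domain and codomain). Then there exist integers $n,m\ge 0$, $k_1\ge\dots\ge k_n\ge 0$ and $l_1\ge\dots\ge l_m\ge 0$ with $(k_1,\dots,k_n)\neq(l_1,\dots,l_m)$ such that \[ \bigotimes_{i=1}^n E_{0,k_i,0}=_A\bigotimes_{j=1}^m E_{0,l_j,0} \] (an empty tensor product denoting the empty cobordism $\mathbf{0}\to\mathbf{0}$).
   Context: $\mathbf{2Cob}$ is the category whose objects are $\mathbf{0},\mathbf{1},\mathbf{2},\dots$ ($\mathbf{n}$ being a sequence of $n$ oriented circles) and whose arrows $\mathbf{n}\to\mathbf{m}$ are diffeomorphism classes (rel boundary) of oriented 2-cobordisms with $n$ ingoing and $m$ outgoing boundary circles; it is symmetric monoidal with $\otimes$ given by disjoint union placed side by side. For $m,k,n\ge 0$, $E_{m,k,n}$ denotes the connected 2-cobordism of genus $k$ with $n$ ingoing and $m$ outgoing boundary circles; thus $E_{0,k,0}$ is the closed connected orientable surface of genus $k$ viewed as a cobordism $\mathbf{0}\to\mathbf{0}$. For a commutative Frobenius algebra $(A,\mu,\eta,\delta,\varepsilon)$, $F_A$ denotes the symmetric strong monoidal functor $\mathbf{2Cob}\to\mathbf{Vect}$ with $F_A\mathbf{1}=A$ and $F_A(E_{1,0,2})=\mu$, $F_A(E_{1,0,0})=\eta$,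 $F_A(E_{2,0,1})=\delta$, $F_A(E_{0,0,1})=\varepsilon$. One writes $K=_A L$ if $F_AK=F_AL$. *)

theory Defs
  imports Main "HOL-Library.Multiset"
begin

text \<open>A finite-dimensional algebra A over a field 'k is represented w.r.t. a basis
indexed by the finite type 'b: A = ('b => 'k).  mu a b l is the coefficient of e_l
in mu(e_a (x) e_b); eta l is the coefficient of e_l in eta(1); delta a x y is the
coefficient of e_x (x) e_y in delta(e_a); eps a = eps(e_a).\<close>

definition comm_frobenius ::
  "('b::finite \<Rightarrow> 'b \<Rightarrow> 'b \<Rightarrow> 'k::field) \<Rightarrow> ('b \<Rightarrow> 'k) \<Rightarrow>
   ('b \<Rightarrow> 'b \<Rightarrow> 'b \<Rightarrow> 'k) \<Rightarrow> ('b \<Rightarrow> 'k) \<Rightarrow> bool" where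
  "comm_frobenius mu eta delta eps \<longleftrightarrow>
     (\<forall>a b c l. (\<Sum>i\<in>UNIV. mu a b i * mu i c l) = (\<Sum>i\<in>UNIV. mu b c i * mu a i l)) \<and>
     (\<forall>a l. (\<Sum>i\<in>UNIV. eta i * mu i a l) = (if a = l then 1 else 0)) \<and>
     (\<forall>a l. (\<Sum>i\<in>UNIV. eta i * mu a i l) = (if a = l then 1 else 0)) \<and>
     (\<forall>a b l. mu a b l = mu b a l) \<and>
     (\<forall>a x y z. (\<Sum>i\<in>UNIV. delta a i z * delta i x y) = (\<Sum>i\<in>UNIV. delta a x i * delta i y z)) \<and>
     (\<forall>a l. (\<Sum>i\<in>UNIV. delta a i l * eps i) = (if a = l then 1 else 0)) \<and>
     (\<forall>a l. (\<Sum>i\<in>UNIV. delta a l i * eps i) = (if a = l then 1 else 0)) \<and>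
     (\<forall>a b x y. (\<Sum>i\<in>UNIV. mu a b i * delta i x y) = (\<Sum>c\<in>UNIV. delta b c y * mu a c x)) \<and>
     (\<forall>a b x y. (\<Sum>i\<in>UNIV. mu a b i * delta i x y) = (\<Sum>d\<in>UNIV. delta a x d * mu d b y))"

definition basisv :: "'b \<Rightarrow> 'b \<Rightarrow> 'k::field" where
  "basisv x = (\<lambda>i. if i = x then 1 else 0)"

definition multv :: "('b::finite \<Rightarrow> 'b \<Rightarrow> 'b \<Rightarrow> 'k::field) \<Rightarrow> ('b \<Rightarrow> 'k) \<Rightarrow> ('b \<Rightarrow> 'k) \<Rightarrow> 'b \<Rightarrow> 'k" where
  "multv mu u v = (\<lambda>l. \<Sum>i\<in>UNIV. \<Sum>j\<in>UNIV. u i * v j * mu i j l)"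

fun prodv :: "('b::finite \<Rightarrow> 'b \<Rightarrow> 'b \<Rightarrow> 'k::field) \<Rightarrow> ('b \<Rightarrow> 'k) \<Rightarrow> 'b list \<Rightarrow> 'b \<Rightarrow> 'k" where
  "prodv mu eta [] = eta"
| "prodv mu eta (x # xs) = multv mu (basisv x) (prodv mu eta xs)"

definition handlev :: "('b::finite \<Rightarrow> 'b \<Rightarrow> 'b \<Rightarrow> 'k::field) \<Rightarrow> ('b \<Rightarrow> 'b \<Rightarrow> 'b \<Rightarrow> 'k) \<Rightarrow> ('b \<Rightarrow> 'k) \<Rightarrow> 'b \<Rightarrow> 'k" where
  "handlev mu delta v = (\<lambda>l. \<Sum>i\<in>UNIV. \<Sum>a\<in>UNIV. \<Sum>b\<in>UNIV. v i * delta i a b * mu a b l)"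

text \<open>coefficient of e_y1 (x) ... (x) e_yq in the iterated coproduct delta^(q)(v)
  (q = 0 gives eps)\<close>
fun coprv :: "('b::finite \<Rightarrow> 'b \<Rightarrow> 'b \<Rightarrow> 'k::field) \<Rightarrow> ('b \<Rightarrow> 'k) \<Rightarrow> ('b \<Rightarrow> 'k) \<Rightarrow> 'b list \<Rightarrow> 'k" where
  "coprv delta eps v [] = (\<Sum>i\<in>UNIV. v i * eps i)"
| "coprv delta eps v [y] = v y"
| "coprv delta eps v (y # y' # ys) =
     coprv delta eps (\<lambda>b. \<Sum>i\<in>UNIV. v i * delta i y b) (y' # ys)"

text \<open>matrix coefficient of F_A(E_{q,g,p}) : A^(x)p -> A^(x)q, input basis
  multi-index xs (length p), output multi-index ys (length q)\<close>
definition connv where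
  "connv mu eta delta eps g xs ys =
     coprv delta eps ((handlev mu delta ^^ g) (prodv mu eta xs)) ys"

text \<open>An arrow n -> m of 2Cob (a diffeomorphism class rel boundary of oriented
cobordisms) is determined by the partition of its boundary circles
(Inl i = i-th ingoing circle, Inr j = j-th outgoing circle) into the boundaries
of the components meeting the boundary, the genus of each such component,
and the multiset of genera of its closed components.\<close>

type_synonym cob = "nat \<times> nat \<times> ((nat + nat) set \<times> nat) set \<times> nat multiset"

definition bnd :: "nat \<Rightarrow> nat \<Rightarrow> (nat + nat) set" where
  "bnd n m = Inl ` {..<n} \<union> Inr ` {..<m}"

definition is_arrow :: "cob \<Rightarrow> bool" where
  "is_arrow K = (case K of (n, m, P, C) \<Rightarrow>
     finite P \<and> (\<forall>(B, g) \<in> P. B \<noteq> {}) \<and>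
     (\<forall>(B, g) \<in> P. \<forall>(B', g') \<in> P. (B, g) \<noteq> (B', g') \<longrightarrow> B \<inter> B' = {}) \<and>
     \<Union> (fst ` P) = bnd n m)"

fun cdom :: "cob \<Rightarrow> nat" where "cdom (n, m, P, C) = n"
fun ccod :: "cob \<Rightarrow> nat" where "ccod (n, m, P, C) = m"

text \<open>E_{m,k,n}: connected, genus k, n ingoing and m outgoing circles\<close>
definition E :: "nat \<Rightarrow> nat \<Rightarrow> nat \<Rightarrow> cob" where
  "E m k n = (if n + m = 0 then (0, 0, {}, {#k#}) else (n, m, {(bnd n m, k)}, {#}))"

definition shiftb :: "nat \<Rightarrow> nat \<Rightarrow> nat + nat \<Rightarrow> nat + nat" where
  "shiftb n m = case_sum (\<lambda>i. Inl (i + n)) (\<lambda>j. Inr (j + m))"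

fun ctensor :: "cob \<Rightarrow> cob \<Rightarrow> cob" where
  "ctensor (n1, m1, P1, C1) (n2, m2, P2, C2) =
     (n1 + n2, m1 + m2, P1 \<union> (\<lambda>(B, g). (shiftb n1 m1 ` B, g)) ` P2, C1 + C2)"

definition cunit :: cob where "cunit = (0, 0, {}, {#})"

definition tensor_list :: "cob list \<Rightarrow> cob" where
  "tensor_list Ks = foldr ctensor Ks cunit"

text \<open>matrix coefficient of F_A K, output multi-index ys, input multi-index xs\<close>
fun FA_coeff :: "('b::finite \<Rightarrow> 'b \<Rightarrow> 'b \<Rightarrow> 'k::field) \<Rightarrow> ('b \<Rightarrow> 'k) \<Rightarrow>
    ('b \<Rightarrow> 'b \<Rightarrow> 'b \<Rightarrow> 'k) \<Rightarrow> ('b \<Rightarrow> 'k) \<Rightarrow> cob \<Rightarrow> 'b list \<Rightarrow> 'b list \<Rightarrow> 'k" where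
  "FA_coeff mu eta delta eps (n, m, P, C) ys xs =
     (\<Prod>(B, g) \<in> P. connv mu eta delta eps g
         (map (\<lambda>i. xs ! i) (sorted_list_of_set {i. Inl i \<in> B}))
         (map (\<lambda>j. ys ! j) (sorted_list_of_set {j. Inr j \<in> B}))) *
     (\<Prod>g \<in># C. connv mu eta delta eps g [] [])"

definition FA_eq where
  "FA_eq mu eta delta eps K L \<longleftrightarrow>
     cdom K = cdom L \<and> ccod K = ccod L \<and>
     (\<forall>xs ys. length xs = cdom K \<longrightarrow> length ys = ccod K \<longrightarrow>
        FA_coeff mu eta delta eps K ys xs = FA_coeff mu eta delta eps L ys xs)"

end

theory Submission
  imports Defs "HOL-Library.FuncSet" "HOL-Library.Nat_Bijection"
begin

text \<open>
  Cap every boundary circle \<open>x\<close> of an arrow with a connected surface of genus \<open>t x\<close>.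
  A component \<open>(B, g)\<close> becomes a closed surface of genus \<open>g + (\<Sum>x\<in>B. t x)\<close>, and the
  value of the capped arrow under \<open>F\<^sub>A\<close> is a contraction of the matrix of \<open>F\<^sub>A K\<close>, so
  \<open>K =\<^sub>A L\<close> makes the two capped closed surfaces \<open>A\<close>-equivalent. Computing the contraction
  rests on the \<open>A\<close>-linearity of the handle operator \<open>\<mu> \<circ> \<delta>\<close> (a consequence of the
  Frobenius relation), which makes gluing add genera.

  With \<open>t x = N * 2 ^ sum_encode x\<close> and \<open>N\<close> larger than every genus occurring in \<open>K\<close>
  and \<open>L\<close>, capping is injective: capped boundary components have genus \<open>\<ge> N\<close>, such a genus
  determines \<open>g\<close> as its remainder modulo \<open>N\<close> and \<open>B\<close> as the binary expansion of its
  quotient, and closed components stay below \<open>N\<close>. So \<open>K \<noteq> L\<close> yields two different multisets of genera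
  with equal value.
\<close>

section \<open>Sums over tuples of basis indices\<close>

lemma sum_rotate3:
  "(\<Sum>x\<in>A. \<Sum>y\<in>B. \<Sum>z\<in>C. f x y z) = (\<Sum>y\<in>B. \<Sum>z\<in>C. \<Sum>x\<in>A. f x y z)"
  for f :: "'a \<Rightarrow> 'b \<Rightarrow> 'c \<Rightarrow> 'd::comm_monoid_add"
  by (subst sum.swap) (simp only: sum.swap[of _ A])

lemma sum_lists_length_Suc:
  "(\<Sum>zs | length zs = Suc n. f zs) = (\<Sum>x\<in>UNIV. \<Sum>xs | length xs = n. f (x # xs))"
  for f :: "'a::finite list \<Rightarrow> 'c::comm_monoid_add"
proof -
  have lists: "{zs. length zs = Suc n} = case_prod (#) ` (UNIV \<times> {xs. length xs = n})"
    by (auto simp: length_Suc_conv)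
  have "inj_on (case_prod (#)) (UNIV \<times> {xs::'a list. length xs = n})"
    by (auto simp: inj_on_def)
  then have "(\<Sum>zs | length zs = Suc n. f zs) = (\<Sum>(x, xs)\<in>UNIV \<times> {xs. length xs = n}. f (x # xs))"
    unfolding lists by (subst sum.reindex) (simp_all add: case_prod_unfold)
  then show ?thesis
    by (simp add: sum.cartesian_product)
qed

lemma sum_lists_length_add:
  "(\<Sum>zs | length zs = m + n. f zs) = (\<Sum>xs | length xs = m. \<Sum>ys | length ys = n. f (xs @ ys))"
  for f :: "'a::finite list \<Rightarrow> 'c::comm_monoid_add"
  by (induction m arbitrary: f) (simp_all add: sum_lists_length_Suc)

lemma sum_PiE_map_distinct:
  fixes f :: "'b list \<Rightarrow> 'c::comm_monoid_add" and L :: "'a list"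
  assumes "distinct L"
  shows "(\<Sum>\<psi>\<in>PiE (set L) (\<lambda>_. UNIV). f (map \<psi> L)) = (\<Sum>zs | length zs = length L. f zs)"
  by (rule sum.reindex_bij_witness[where j = "\<lambda>\<psi>. map \<psi> L"
        and i = "\<lambda>zs. restrict (the \<circ> map_of (zip L zs)) (set L)"])
     (use assms in \<open>auto simp: map_of_zip_map map_of_zip_nth list_eq_iff_nth_eq PiE_iff extensional_def\<close>)

lemma prod_list_map2_map_distinct:
  "distinct xs \<Longrightarrow> prod_list (map2 f xs (map \<psi> xs)) = (\<Prod>x\<in>set xs. f x (\<psi> x))"
  by (simp add: zip_map2 zip_same_conv_map comp_def prod.distinct_set_conv_list)

lemma sum_PiE_Un_disjoint:
  fixes f :: "('x \<Rightarrow> 'b) \<Rightarrow> 'c::comm_monoid_add"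
  assumes "A \<inter> B = {}"
  shows "(\<Sum>\<phi>\<in>PiE (A \<union> B) (\<lambda>_. UNIV). f \<phi>)
       = (\<Sum>\<psi>\<in>PiE A (\<lambda>_. UNIV). \<Sum>\<chi>\<in>PiE B (\<lambda>_. UNIV). f (\<lambda>x. if x \<in> A then \<psi> x else \<chi> x))"
proof -
  define merge :: "('x \<Rightarrow> 'b) \<times> ('x \<Rightarrow> 'b) \<Rightarrow> 'x \<Rightarrow> 'b"
    where "merge = (\<lambda>(\<psi>, \<chi>) x. if x \<in> A then \<psi> x else \<chi> x)"
  have "(\<Sum>\<phi>\<in>PiE (A \<union> B) (\<lambda>_. UNIV). f \<phi>)
      = (\<Sum>\<psi>\<chi>\<in>PiE A (\<lambda>_. UNIV) \<times> PiE B (\<lambda>_. UNIV). f (merge \<psi>\<chi>))"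
  proof (rule sum.reindex_bij_witness[where i = merge and j = "\<lambda>\<phi>. (restrict \<phi> A, restrict \<phi> B)"])
    fix \<phi> :: "'x \<Rightarrow> 'b"
    assume "\<phi> \<in> PiE (A \<union> B) (\<lambda>_. UNIV)"
    then show "merge (restrict \<phi> A, restrict \<phi> B) = \<phi>"
      by (auto simp: merge_def PiE_iff extensional_def fun_eq_iff)
    then show "f (merge (restrict \<phi> A, restrict \<phi> B)) = f \<phi>"
      by simp
  next
    fix \<psi>\<chi> :: "('x \<Rightarrow> 'b) \<times> ('x \<Rightarrow> 'b)"
    assume "\<psi>\<chi> \<in> PiE A (\<lambda>_. UNIV) \<times> PiE B (\<lambda>_. UNIV)"
    then show "(restrict (merge \<psi>\<chi>) A, restrict (merge \<psi>\<chi>) B) = \<psi>\<chi>"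
      and "merge \<psi>\<chi> \<in> PiE (A \<union> B) (\<lambda>_. UNIV)"
      using assms by (auto simp: merge_def PiE_iff extensional_def fun_eq_iff)
  qed simp
  then show ?thesis
    by (simp add: sum.cartesian_product merge_def case_prod_unfold)
qed

lemma sum_PiE_UNION_prod:
  fixes S :: "'p \<Rightarrow> 'x set" and G :: "'p \<Rightarrow> ('x \<Rightarrow> 'b::finite) \<Rightarrow> 'k::comm_semiring_1"
  assumes "finite P" and "\<forall>p\<in>P. finite (S p)"
    and "\<forall>p\<in>P. \<forall>q\<in>P. p \<noteq> q \<longrightarrow> S p \<inter> S q = {}"
    and "\<And>p \<phi> \<phi>'. p \<in> P \<Longrightarrow> (\<And>x. x \<in> S p \<Longrightarrow> \<phi> x = \<phi>' x) \<Longrightarrow> G p \<phi> = G p \<phi>'"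
  shows "(\<Sum>\<phi>\<in>PiE (\<Union>(S ` P)) (\<lambda>_. UNIV). \<Prod>p\<in>P. G p \<phi>) = (\<Prod>p\<in>P. \<Sum>\<psi>\<in>PiE (S p) (\<lambda>_. UNIV). G p \<psi>)"
  using assms
proof (induction P rule: finite_induct)
  case empty
  then show ?case by simp
next
  case (insert a P)
  define U where "U = \<Union>(S ` P)"
  have disj: "S a \<inter> U = {}"
    using insert.prems(2) insert.hyps(2) unfolding U_def by fastforce
  have local: "G p \<phi> = G p \<phi>'" if "p \<in> insert a P" "\<And>x. x \<in> S p \<Longrightarrow> \<phi> x = \<phi>' x" for p \<phi> \<phi>'
    using that by (rule insert.prems(3))
  have IH: "(\<Sum>\<chi>\<in>PiE U (\<lambda>_. UNIV). \<Prod>p\<in>P. G p \<chi>) = (\<Prod>p\<in>P. \<Sum>\<psi>\<in>PiE (S p) (\<lambda>_. UNIV). G p \<psi>)"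
    unfolding U_def
  proof (rule insert.IH)
    fix p and \<phi> \<phi>' :: "'x \<Rightarrow> 'b"
    assume p: "p \<in> P" and eq: "\<And>x. x \<in> S p \<Longrightarrow> \<phi> x = \<phi>' x"
    show "G p \<phi> = G p \<phi>'"
      by (rule local) (simp_all add: p eq)
  qed (use insert.prems(1,2) in auto)
  have "(\<Sum>\<phi>\<in>PiE (S a \<union> U) (\<lambda>_. UNIV). G a \<phi> * (\<Prod>p\<in>P. G p \<phi>))
      = (\<Sum>\<psi>\<in>PiE (S a) (\<lambda>_. UNIV). \<Sum>\<chi>\<in>PiE U (\<lambda>_. UNIV). G a \<psi> * (\<Prod>p\<in>P. G p \<chi>))"
    unfolding sum_PiE_Un_disjoint[OF disj]
  proof (intro sum.cong refl)
    fix \<psi> \<chi> :: "'x \<Rightarrow> 'b"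
    have "G a (\<lambda>x. if x \<in> S a then \<psi> x else \<chi> x) = G a \<psi>"
      by (rule local) simp_all
    moreover have "G p (\<lambda>x. if x \<in> S a then \<psi> x else \<chi> x) = G p \<chi>" if "p \<in> P" for p
      using that disj by (intro local) (auto simp: U_def)
    ultimately show "G a (\<lambda>x. if x \<in> S a then \<psi> x else \<chi> x) * (\<Prod>p\<in>P. G p (\<lambda>x. if x \<in> S a then \<psi> x else \<chi> x))
        = G a \<psi> * (\<Prod>p\<in>P. G p \<chi>)"
      by simp
  qed
  also have "\<dots> = (\<Sum>\<psi>\<in>PiE (S a) (\<lambda>_. UNIV). G a \<psi>) * (\<Sum>\<chi>\<in>PiE U (\<lambda>_. UNIV). \<Prod>p\<in>P. G p \<chi>)"
    by (rule sum_product[symmetric])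
  finally show ?case
    using insert.hyps by (simp add: IH flip: U_def)
qed

section \<open>Gluing surfaces in a commutative Frobenius algebra\<close>

locale comm_frobenius_algebra =
  fixes mu delta :: "'b::finite \<Rightarrow> 'b \<Rightarrow> 'b \<Rightarrow> 'k::field"
    and eta eps :: "'b \<Rightarrow> 'k"
  assumes comm_frobenius: "comm_frobenius mu eta delta eps"
begin

lemma mu_assoc: "(\<Sum>i\<in>UNIV. mu a b i * mu i c l) = (\<Sum>i\<in>UNIV. mu b c i * mu a i l)"
  using comm_frobenius unfolding comm_frobenius_def by (elim conjE allE) assumption

lemma mu_unit_right: "(\<Sum>i\<in>UNIV. eta i * mu a i l) = (if a = l then 1 else 0)"
  using comm_frobenius unfolding comm_frobenius_def by (elim conjE allE) assumption

lemma delta_counit_right: "(\<Sum>i\<in>UNIV. delta a l i * eps i) = (if a = l then 1 else 0)"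
  using comm_frobenius unfolding comm_frobenius_def by (elim conjE allE) assumption

lemma frobenius_left: "(\<Sum>i\<in>UNIV. mu a b i * delta i x y) = (\<Sum>c\<in>UNIV. delta b c y * mu a c x)"
  using comm_frobenius unfolding comm_frobenius_def by (elim conjE allE) assumption

lemma frobenius_right: "(\<Sum>i\<in>UNIV. mu a b i * delta i x y) = (\<Sum>d\<in>UNIV. delta a x d * mu d b y)"
  using comm_frobenius unfolding comm_frobenius_def by (elim conjE allE) assumption

abbreviation mul :: "('b \<Rightarrow> 'k) \<Rightarrow> ('b \<Rightarrow> 'k) \<Rightarrow> 'b \<Rightarrow> 'k" where
  "mul \<equiv> multv mu"

abbreviation handle :: "('b \<Rightarrow> 'k) \<Rightarrow> 'b \<Rightarrow> 'k" where
  "handle \<equiv> handlev mu delta"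

definition counit :: "('b \<Rightarrow> 'k) \<Rightarrow> 'k" where
  "counit v = (\<Sum>i\<in>UNIV. v i * eps i)"

definition handle_coeff :: "'b \<Rightarrow> 'b \<Rightarrow> 'k" where
  "handle_coeff i l = (\<Sum>a\<in>UNIV. \<Sum>b\<in>UNIV. delta i a b * mu a b l)"

text \<open>\<open>genus_vec g\<close>, \<open>genus_covec g\<close> and \<open>closed_value g\<close> are \<open>F\<^sub>A E\<^sub>1\<^sub>,\<^sub>g\<^sub>,\<^sub>0\<close>,
  \<open>F\<^sub>A E\<^sub>0\<^sub>,\<^sub>g\<^sub>,\<^sub>1\<close> and \<open>F\<^sub>A E\<^sub>0\<^sub>,\<^sub>g\<^sub>,\<^sub>0\<close> in coordinates.\<close>

definition genus_vec :: "nat \<Rightarrow> 'b \<Rightarrow> 'k" where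
  "genus_vec g = (handle ^^ g) eta"

definition genus_covec :: "nat \<Rightarrow> 'b \<Rightarrow> 'k" where
  "genus_covec g y = counit (mul (basisv y) (genus_vec g))"

definition closed_value :: "nat \<Rightarrow> 'k" where
  "closed_value g = counit (genus_vec g)"

lemma mul_eta: "mul u eta = u"
proof
  fix l
  have "mul u eta l = (\<Sum>i\<in>UNIV. u i * (\<Sum>j\<in>UNIV. eta j * mu i j l))"
    by (simp add: multv_def sum_distrib_left mult_ac)
  also have "\<dots> = u l"
    by (simp add: mu_unit_right if_distrib[of "\<lambda>x. u _ * x"] cong: if_cong)
  finally show "mul u eta l = u l" .
qed

lemma handle_eq: "handle v l = (\<Sum>i\<in>UNIV. v i * handle_coeff i l)"
  by (simp add: handlev_def handle_coeff_def sum_distrib_left mult_ac)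

lemma mu_handle_coeff:
  "(\<Sum>i\<in>UNIV. mu p q i * handle_coeff i l) = (\<Sum>i\<in>UNIV. handle_coeff q i * mu p i l)"
proof -
  have "(\<Sum>i\<in>UNIV. mu p q i * handle_coeff i l)
      = (\<Sum>i\<in>UNIV. \<Sum>a\<in>UNIV. \<Sum>b\<in>UNIV. mu p q i * delta i a b * mu a b l)"
    by (simp add: handle_coeff_def sum_distrib_left mult_ac)
  also have "\<dots> = (\<Sum>a\<in>UNIV. \<Sum>b\<in>UNIV. (\<Sum>i\<in>UNIV. mu p q i * delta i a b) * mu a b l)"
    by (subst sum_rotate3) (simp add: sum_distrib_right)
  also have "\<dots> = (\<Sum>a\<in>UNIV. \<Sum>b\<in>UNIV. \<Sum>c\<in>UNIV. delta q c b * (mu p c a * mu a b l))"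
    by (simp only: frobenius_left sum_distrib_right mult.assoc)
  also have "\<dots> = (\<Sum>b\<in>UNIV. \<Sum>c\<in>UNIV. delta q c b * (\<Sum>a\<in>UNIV. mu p c a * mu a b l))"
    by (subst sum_rotate3) (simp add: sum_distrib_left)
  also have "\<dots> = (\<Sum>b\<in>UNIV. \<Sum>c\<in>UNIV. \<Sum>i\<in>UNIV. delta q c b * mu c b i * mu p i l)"
    by (simp only: mu_assoc) (simp add: sum_distrib_left mult_ac)
  also have "\<dots> = (\<Sum>i\<in>UNIV. (\<Sum>b\<in>UNIV. \<Sum>c\<in>UNIV. delta q c b * mu c b i) * mu p i l)"
    by (subst sum_rotate3[symmetric]) (simp add: sum_distrib_right)
  also have "\<dots> = (\<Sum>i\<in>UNIV. handle_coeff q i * mu p i l)"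
    unfolding handle_coeff_def by (subst (2) sum.swap) (rule refl)
  finally show ?thesis .
qed

lemma handle_mul: "handle (mul u w) = mul u (handle w)"
proof
  fix l
  have "handle (mul u w) l = (\<Sum>i\<in>UNIV. \<Sum>p\<in>UNIV. \<Sum>q\<in>UNIV. u p * w q * (mu p q i * handle_coeff i l))"
    by (simp add: handle_eq multv_def sum_distrib_right mult.assoc)
  also have "\<dots> = (\<Sum>p\<in>UNIV. \<Sum>q\<in>UNIV. u p * w q * (\<Sum>i\<in>UNIV. handle_coeff q i * mu p i l))"
    by (subst sum_rotate3) (simp add: sum_distrib_left flip: mu_handle_coeff)
  also have "\<dots> = (\<Sum>p\<in>UNIV. \<Sum>i\<in>UNIV. \<Sum>q\<in>UNIV. u p * (w q * handle_coeff q i) * mu p i l)"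
    by (simp add: sum_distrib_left mult_ac) (rule sum.cong[OF refl], rule sum.swap)
  also have "\<dots> = mul u (handle w) l"
    by (simp add: multv_def handle_eq sum_distrib_left sum_distrib_right)
  finally show "handle (mul u w) l = mul u (handle w) l" .
qed

lemma funpow_handle: "(handle ^^ g) u = mul u (genus_vec g)"
  by (induction g) (simp_all add: genus_vec_def mul_eta handle_mul)

lemma mul_genus_vec: "mul (genus_vec a) (genus_vec b) = genus_vec (a + b)"
proof -
  have "mul (genus_vec a) (genus_vec b) = (handle ^^ b) (genus_vec a)"
    by (simp add: funpow_handle)
  also have "\<dots> = genus_vec (b + a)"
    by (simp add: genus_vec_def funpow_add)
  finally show ?thesis
    by (simp add: add.commute)
qed

lemma mul_mul_genus_vec: "mul (mul v (genus_vec r)) (genus_vec b) = mul v (genus_vec (b + r))"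
  by (metis funpow_handle funpow_add comp_apply)

lemma mul_basisv: "mul (basisv x) u l = (\<Sum>j\<in>UNIV. u j * mu x j l)"
  by (simp add: multv_def basisv_def if_distrib[of "\<lambda>x. x * _"] cong: if_cong) (subst sum.swap, simp)

lemma sum_mul_basisv: "(\<Sum>x\<in>UNIV. c x * mul (basisv x) u l) = mul c u l"
  by (simp add: mul_basisv) (simp add: multv_def sum_distrib_left mult_ac)

lemma sum_mul_basisv_right:
  "(\<Sum>s\<in>S. mul (basisv x) (f s) l * c s) = mul (basisv x) (\<lambda>l'. \<Sum>s\<in>S. f s l' * c s) l"
proof -
  have "(\<Sum>s\<in>S. mul (basisv x) (f s) l * c s) = (\<Sum>s\<in>S. \<Sum>j\<in>UNIV. f s j * c s * mu x j l)"
    by (simp add: mul_basisv sum_distrib_left sum_distrib_right mult_ac)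
  also have "\<dots> = (\<Sum>j\<in>UNIV. \<Sum>s\<in>S. f s j * c s * mu x j l)"
    by (rule sum.swap)
  also have "\<dots> = mul (basisv x) (\<lambda>l'. \<Sum>s\<in>S. f s l' * c s) l"
    by (simp add: mul_basisv sum_distrib_right)
  finally show ?thesis .
qed

lemma sum_counit_mul_basisv: "(\<Sum>y\<in>UNIV. v y * counit (mul (basisv y) z)) = counit (mul v z)"
proof -
  have "(\<Sum>y\<in>UNIV. v y * counit (mul (basisv y) z))
      = (\<Sum>y\<in>UNIV. \<Sum>l\<in>UNIV. v y * (mul (basisv y) z l * eps l))"
    by (simp add: counit_def sum_distrib_left)
  also have "\<dots> = (\<Sum>l\<in>UNIV. (\<Sum>y\<in>UNIV. v y * mul (basisv y) z l) * eps l)"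
    by (subst sum.swap) (simp add: sum_distrib_right mult.assoc)
  also have "\<dots> = counit (mul v z)"
    by (simp add: sum_mul_basisv counit_def)
  finally show ?thesis .
qed

lemma delta_counit_mu: "(\<Sum>c\<in>UNIV. delta i y c * (\<Sum>l\<in>UNIV. mu c j l * eps l)) = mu i j y"
proof -
  have "(\<Sum>c\<in>UNIV. delta i y c * (\<Sum>l\<in>UNIV. mu c j l * eps l))
      = (\<Sum>c\<in>UNIV. \<Sum>l\<in>UNIV. delta i y c * mu c j l * eps l)"
    by (simp add: sum_distrib_left mult_ac)
  also have "\<dots> = (\<Sum>l\<in>UNIV. (\<Sum>k\<in>UNIV. mu i j k * delta k y l) * eps l)"
    by (subst sum.swap) (simp add: frobenius_right flip: sum_distrib_right)
  also have "\<dots> = (\<Sum>k\<in>UNIV. mu i j k * (\<Sum>l\<in>UNIV. delta k y l * eps l))"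
    unfolding sum_distrib_left sum_distrib_right mult.assoc by (rule sum.swap)
  also have "\<dots> = mu i j y"
    by (simp add: delta_counit_right if_distrib[of "\<lambda>x. mu _ _ _ * x"] cong: if_cong)
  finally show ?thesis .
qed

lemma counit_mul_basisv:
  "counit (mul (basisv c) z) = (\<Sum>j\<in>UNIV. z j * (\<Sum>l\<in>UNIV. mu c j l * eps l))"
  unfolding counit_def mul_basisv sum_distrib_left sum_distrib_right mult.assoc by (rule sum.swap)

lemma sum_delta_counit_mul:
  "(\<Sum>c\<in>UNIV. (\<Sum>i\<in>UNIV. v i * delta i y c) * counit (mul (basisv c) z)) = mul v z y"
proof -
  have "(\<Sum>c\<in>UNIV. (\<Sum>i\<in>UNIV. v i * delta i y c) * counit (mul (basisv c) z))
      = (\<Sum>c\<in>UNIV. \<Sum>i\<in>UNIV. \<Sum>j\<in>UNIV. v i * z j * (delta i y c * (\<Sum>l\<in>UNIV. mu c j l * eps l)))"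
  proof (rule sum.cong[OF refl])
    fix c
    define M where "M j = (\<Sum>l\<in>UNIV. mu c j l * eps l)" for j
    have "(\<Sum>i\<in>UNIV. v i * delta i y c) * counit (mul (basisv c) z)
        = (\<Sum>i\<in>UNIV. \<Sum>j\<in>UNIV. v i * z j * (delta i y c * M j))"
      unfolding counit_mul_basisv M_def[symmetric] by (simp add: sum_distrib_left sum_distrib_right mult_ac)
    then show "(\<Sum>i\<in>UNIV. v i * delta i y c) * counit (mul (basisv c) z)
        = (\<Sum>i\<in>UNIV. \<Sum>j\<in>UNIV. v i * z j * (delta i y c * (\<Sum>l\<in>UNIV. mu c j l * eps l)))"
      by (simp add: M_def)
  qed
  also have "\<dots> = (\<Sum>i\<in>UNIV. \<Sum>j\<in>UNIV. v i * z j * (\<Sum>c\<in>UNIV. delta i y c * (\<Sum>l\<in>UNIV. mu c j l * eps l)))"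
    by (subst sum_rotate3) (simp add: sum_distrib_left)
  also have "\<dots> = mul v z y"
    by (simp add: delta_counit_mu multv_def)
  finally show ?thesis .
qed

lemma sum_prodv_genus_vec:
  "(\<Sum>xs | length xs = length as. prodv mu eta xs l * prod_list (map2 genus_vec as xs))
     = genus_vec (sum_list as) l"
proof (induction as arbitrary: l)
  case Nil
  then show ?case by (simp add: genus_vec_def)
next
  case (Cons a as)
  have "(\<Sum>xs | length xs = length (a # as). prodv mu eta xs l * prod_list (map2 genus_vec (a # as) xs))
      = (\<Sum>x\<in>UNIV. genus_vec a x * (\<Sum>xs | length xs = length as.
            mul (basisv x) (prodv mu eta xs) l * prod_list (map2 genus_vec as xs)))"
    by (simp add: sum_lists_length_Suc sum_distrib_left mult_ac)
  also have "\<dots> = (\<Sum>x\<in>UNIV. genus_vec a x * mul (basisv x) (genus_vec (sum_list as)) l)"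
    by (simp add: sum_mul_basisv_right Cons.IH)
  also have "\<dots> = genus_vec (sum_list (a # as)) l"
    by (simp add: sum_mul_basisv mul_genus_vec)
  finally show ?case .
qed

lemma sum_coprv_genus_covec:
  "(\<Sum>ys | length ys = length bs. coprv delta eps v ys * prod_list (map2 genus_covec bs ys))
     = counit (mul v (genus_vec (sum_list bs)))"
proof (induction bs arbitrary: v)
  case Nil
  then show ?case by (simp add: genus_vec_def mul_eta counit_def)
next
  case (Cons b bs)
  show ?case
  proof (cases bs)
    case Nil
    then show ?thesis
      by (simp add: sum_lists_length_Suc genus_covec_def sum_counit_mul_basisv)
  next
    case (Cons b' bs')
    define v' where "v' y = (\<lambda>c. \<Sum>i\<in>UNIV. v i * delta i y c)" for y
    have coprv_Cons: "coprv delta eps v (y # ys) = coprv delta eps (v' y) ys"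
      if "length ys = length bs" for y ys
      using that Cons by (cases ys) (auto simp: v'_def)
    have "(\<Sum>ys | length ys = length (b # bs). coprv delta eps v ys * prod_list (map2 genus_covec (b # bs) ys))
        = (\<Sum>y\<in>UNIV. genus_covec b y * (\<Sum>ys | length ys = length bs.
              coprv delta eps (v' y) ys * prod_list (map2 genus_covec bs ys)))"
      by (simp add: sum_lists_length_Suc sum_distrib_left) (intro sum.cong refl; simp add: coprv_Cons mult_ac)
    also have "\<dots> = (\<Sum>y\<in>UNIV. genus_covec b y * counit (mul (v' y) (genus_vec (sum_list bs))))"
      by (simp add: Cons.IH)
    also have "\<dots> = (\<Sum>y\<in>UNIV. mul v (genus_vec (sum_list bs)) y * counit (mul (basisv y) (genus_vec b)))"
    proof (rule sum.cong[OF refl])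
      fix y
      have "counit (mul (v' y) (genus_vec (sum_list bs)))
          = (\<Sum>c\<in>UNIV. v' y c * counit (mul (basisv c) (genus_vec (sum_list bs))))"
        by (simp only: sum_counit_mul_basisv)
      also have "\<dots> = mul v (genus_vec (sum_list bs)) y"
        unfolding v'_def by (rule sum_delta_counit_mul)
      finally show "genus_covec b y * counit (mul (v' y) (genus_vec (sum_list bs)))
          = mul v (genus_vec (sum_list bs)) y * counit (mul (basisv y) (genus_vec b))"
        by (simp add: genus_covec_def mult.commute)
    qed
    also have "\<dots> = counit (mul v (genus_vec (sum_list (b # bs))))"
      by (simp add: sum_counit_mul_basisv mul_mul_genus_vec)
    finally show ?thesis .
  qed
qed

lemma sum_connv_genus_vec_covec:
  "(\<Sum>xs | length xs = length as. \<Sum>ys | length ys = length bs.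
      connv mu eta delta eps g xs ys * prod_list (map2 genus_vec as xs) * prod_list (map2 genus_covec bs ys))
   = closed_value (g + sum_list as + sum_list bs)"
proof -
  define W where "W = genus_vec (sum_list bs + g)"
  define P where "P xs = prod_list (map2 genus_vec as xs)" for xs
  define Q where "Q ys = prod_list (map2 genus_covec bs ys)" for ys
  have "(\<Sum>ys | length ys = length bs. connv mu eta delta eps g xs ys * P xs * Q ys)
      = (\<Sum>l\<in>UNIV. prodv mu eta xs l * P xs * counit (mul (basisv l) W))" for xs
  proof -
    have "(\<Sum>ys | length ys = length bs. connv mu eta delta eps g xs ys * P xs * Q ys)
        = P xs * (\<Sum>ys | length ys = length bs. coprv delta eps (mul (prodv mu eta xs) (genus_vec g)) ys * Q ys)"
      by (simp add: connv_def funpow_handle sum_distrib_left mult_ac)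
    also have "\<dots> = P xs * (\<Sum>l\<in>UNIV. prodv mu eta xs l * counit (mul (basisv l) W))"
      by (simp only: Q_def sum_coprv_genus_covec mul_mul_genus_vec W_def sum_counit_mul_basisv)
    finally show ?thesis
      by (simp add: sum_distrib_left mult_ac)
  qed
  then have "(\<Sum>xs | length xs = length as. \<Sum>ys | length ys = length bs. connv mu eta delta eps g xs ys * P xs * Q ys)
      = (\<Sum>l\<in>UNIV. (\<Sum>xs | length xs = length as. prodv mu eta xs l * P xs) * counit (mul (basisv l) W))"
    by (simp add: sum_distrib_right sum.swap[of _ "{xs. length xs = length as}"])
  also have "\<dots> = closed_value (g + sum_list as + sum_list bs)"
    by (simp only: P_def sum_prodv_genus_vec sum_counit_mul_basisv mul_genus_vec closed_value_def W_def add_ac)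
  finally show ?thesis
    by (simp add: P_def Q_def)
qed

end

section \<open>Capping off the boundary of an arrow\<close>

lemma is_arrow_components:
  assumes "is_arrow (n, m, P, C)"
  shows "finite P" and "\<Union>(fst ` P) = bnd n m"
    and "\<forall>p\<in>P. \<forall>q\<in>P. p \<noteq> q \<longrightarrow> fst p \<inter> fst q = {}"
    and "\<forall>p\<in>P. fst p \<noteq> {}" and "\<forall>p\<in>P. finite (fst p)"
proof -
  show "finite P" and cover: "\<Union>(fst ` P) = bnd n m" and "\<forall>p\<in>P. fst p \<noteq> {}"
    using assms by (auto simp: is_arrow_def)
  show "\<forall>p\<in>P. \<forall>q\<in>P. p \<noteq> q \<longrightarrow> fst p \<inter> fst q = {}"
    using assms unfolding is_arrow_def by fastforce
  have "finite (bnd n m)"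
    by (simp add: bnd_def)
  then show "\<forall>p\<in>P. finite (fst p)"
    using cover by (metis Sup_upper finite_subset image_eqI)
qed

definition boundary_list :: "nat \<Rightarrow> nat \<Rightarrow> (nat + nat) list" where
  "boundary_list n m = map Inl [0..<n] @ map Inr [0..<m]"

lemma distinct_boundary_list: "distinct (boundary_list n m)"
  by (auto simp: boundary_list_def distinct_map)

lemma length_boundary_list: "length (boundary_list n m) = n + m"
  by (simp add: boundary_list_def)

lemma set_boundary_list: "set (boundary_list n m) = bnd n m"
  by (auto simp: boundary_list_def bnd_def)

definition sorted_list_of_sum_set :: "('a::linorder + 'b::linorder) set \<Rightarrow> ('a + 'b) list" where
  "sorted_list_of_sum_set B =
     map Inl (sorted_list_of_set {i. Inl i \<in> B}) @ map Inr (sorted_list_of_set {j. Inr j \<in> B})"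

lemma
  assumes "finite B"
  shows distinct_sorted_list_of_sum_set: "distinct (sorted_list_of_sum_set B)"
    and set_sorted_list_of_sum_set: "set (sorted_list_of_sum_set B) = B"
proof -
  have "finite {i. Inl i \<in> B}" "finite {j. Inr j \<in> B}"
    using finite_vimageI[OF assms, of Inl] finite_vimageI[OF assms, of Inr] by (simp_all add: vimage_def)
  then show "distinct (sorted_list_of_sum_set B)"
    by (auto simp: sorted_list_of_sum_set_def distinct_map)
  show "set (sorted_list_of_sum_set B) = B"
  proof (rule set_eqI)
    show "x \<in> set (sorted_list_of_sum_set B) \<longleftrightarrow> x \<in> B" for x
      using \<open>finite {i. Inl i \<in> B}\<close> \<open>finite {j. Inr j \<in> B}\<close>
      by (cases x) (auto simp: sorted_list_of_sum_set_def)
  qed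
qed

definition capped_genera :: "(nat + nat \<Rightarrow> nat) \<Rightarrow> cob \<Rightarrow> nat multiset" where
  "capped_genera t K = (case K of (n, m, P, C) \<Rightarrow>
     image_mset (\<lambda>(B, g). g + (\<Sum>x\<in>B. t x)) (mset_set P) + C)"

context comm_frobenius_algebra
begin

definition probe :: "(nat + nat \<Rightarrow> nat) \<Rightarrow> nat + nat \<Rightarrow> 'b \<Rightarrow> 'k" where
  "probe t x = (case x of Inl _ \<Rightarrow> genus_vec (t x) | Inr _ \<Rightarrow> genus_covec (t x))"

text \<open>\<open>capped_value t K\<close> is \<open>F\<^sub>A\<close> of \<open>K\<close> with the ingoing circle \<open>x\<close> capped by
  \<open>E\<^sub>1\<^sub>,\<^sub>t\<^sub>x\<^sub>,\<^sub>0\<close> and the outgoing circle \<open>x\<close> by \<open>E\<^sub>0\<^sub>,\<^sub>t\<^sub>x\<^sub>,\<^sub>1\<close>.\<close>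

definition capped_value :: "(nat + nat \<Rightarrow> nat) \<Rightarrow> cob \<Rightarrow> 'k" where
  "capped_value t K = (\<Sum>zs | length zs = cdom K + ccod K.
     FA_coeff mu eta delta eps K (drop (cdom K) zs) (take (cdom K) zs)
       * prod_list (map2 (probe t) (boundary_list (cdom K) (ccod K)) zs))"

lemma capped_value_cong:
  "FA_eq mu eta delta eps K L \<Longrightarrow> capped_value t K = capped_value t L"
  unfolding FA_eq_def capped_value_def by (auto intro!: sum.cong)

lemma connv_closed: "connv mu eta delta eps g [] [] = closed_value g"
  by (simp add: connv_def closed_value_def counit_def genus_vec_def)

lemma sum_PiE_connv_probe:
  assumes "finite B"
  shows "(\<Sum>\<psi>\<in>PiE B (\<lambda>_. UNIV).
            connv mu eta delta eps g (map (\<lambda>i. \<psi> (Inl i)) (sorted_list_of_set {i. Inl i \<in> B}))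
                                     (map (\<lambda>j. \<psi> (Inr j)) (sorted_list_of_set {j. Inr j \<in> B}))
            * (\<Prod>x\<in>B. probe t x (\<psi> x)))
         = closed_value (g + (\<Sum>x\<in>B. t x))"
proof -
  define I where "I = sorted_list_of_set {i. Inl i \<in> B}"
  define J where "J = sorted_list_of_set {j. Inr j \<in> B}"
  define X where "X = sorted_list_of_sum_set B"
  have X: "X = map Inl I @ map Inr J"
    by (simp add: X_def I_def J_def sorted_list_of_sum_set_def)
  have distinct: "distinct X" and set_X: "set X = B"
    using assms by (simp_all add: X_def distinct_sorted_list_of_sum_set set_sorted_list_of_sum_set)
  define F where "F zs = connv mu eta delta eps g (take (length I) zs) (drop (length I) zs)
                         * prod_list (map2 (probe t) X zs)" for zs
  have F_map: "F (map \<psi> X) = connv mu eta delta eps g (map (\<lambda>i. \<psi> (Inl i)) I) (map (\<lambda>j. \<psi> (Inr j)) J)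
                               * (\<Prod>x\<in>B. probe t x (\<psi> x))" for \<psi>
    using prod_list_map2_map_distinct[OF distinct, of "probe t" \<psi>]
    by (simp add: F_def set_X) (simp add: X comp_def)
  have "(\<Sum>\<psi>\<in>PiE B (\<lambda>_. UNIV). connv mu eta delta eps g (map (\<lambda>i. \<psi> (Inl i)) I) (map (\<lambda>j. \<psi> (Inr j)) J)
            * (\<Prod>x\<in>B. probe t x (\<psi> x)))
      = (\<Sum>\<psi>\<in>PiE (set X) (\<lambda>_. UNIV). F (map \<psi> X))"
    by (simp only: F_map set_X)
  also have "\<dots> = (\<Sum>zs | length zs = length X. F zs)"
    by (rule sum_PiE_map_distinct[OF distinct])
  also have "\<dots> = (\<Sum>xs | length xs = length I. \<Sum>ys | length ys = length J. F (xs @ ys))"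
    by (simp add: X sum_lists_length_add)
  also have "\<dots> = (\<Sum>xs | length xs = length (map (t \<circ> Inl) I). \<Sum>ys | length ys = length (map (t \<circ> Inr) J).
      connv mu eta delta eps g xs ys * prod_list (map2 genus_vec (map (t \<circ> Inl) I) xs)
        * prod_list (map2 genus_covec (map (t \<circ> Inr) J) ys))"
    by (auto simp: F_def X probe_def zip_map1 case_prod_unfold comp_def mult.assoc intro!: sum.cong)
  also have "\<dots> = closed_value (g + sum_list (map t X))"
    by (simp only: sum_connv_genus_vec_covec) (simp add: X add.assoc)
  finally show ?thesis
    using distinct by (simp add: I_def J_def set_X sum_list_distinct_conv_sum_set)
qed

lemma FA_coeff_boundary_list:
  assumes "is_arrow (n, m, P, C)"
  shows "FA_coeff mu eta delta eps (n, m, P, C)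
           (drop n (map \<psi> (boundary_list n m))) (take n (map \<psi> (boundary_list n m)))
       = (\<Prod>(B, g)\<in>P. connv mu eta delta eps g
              (map (\<lambda>i. \<psi> (Inl i)) (sorted_list_of_set {i. Inl i \<in> B}))
              (map (\<lambda>j. \<psi> (Inr j)) (sorted_list_of_set {j. Inr j \<in> B})))
         * (\<Prod>g\<in>#C. closed_value g)"
proof -
  have take: "take n (map \<psi> (boundary_list n m)) = map (\<lambda>i. \<psi> (Inl i)) [0..<n]"
    and drop: "drop n (map \<psi> (boundary_list n m)) = map (\<lambda>j. \<psi> (Inr j)) [0..<m]"
    by (simp_all add: boundary_list_def comp_def)
  have component: "connv mu eta delta eps g
          (map (\<lambda>i. map (\<lambda>i. \<psi> (Inl i)) [0..<n] ! i) (sorted_list_of_set {i. Inl i \<in> B}))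
          (map (\<lambda>j. map (\<lambda>j. \<psi> (Inr j)) [0..<m] ! j) (sorted_list_of_set {j. Inr j \<in> B}))
      = connv mu eta delta eps g
          (map (\<lambda>i. \<psi> (Inl i)) (sorted_list_of_set {i. Inl i \<in> B}))
          (map (\<lambda>j. \<psi> (Inr j)) (sorted_list_of_set {j. Inr j \<in> B}))"
    if "(B, g) \<in> P" for B g
  proof -
    have "finite B" "B \<subseteq> bnd n m"
      using is_arrow_components[OF assms] that by force+
    then show ?thesis
      using finite_vimageI[of B Inl] finite_vimageI[of B Inr]
      by (auto simp: bnd_def vimage_def intro!: arg_cong2[where f = "connv mu eta delta eps g"] map_cong)
  qed
  show ?thesis
    unfolding FA_coeff.simps take drop connv_closed
    by (intro arg_cong2[where f = "(*)"] prod.cong refl) (auto simp: component split: prod.splits)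
qed

lemma capped_value_arrow:
  assumes "is_arrow (n, m, P, C)"
  shows "capped_value t (n, m, P, C) = (\<Prod>g\<in>#capped_genera t (n, m, P, C). closed_value g)"
proof -
  note components = is_arrow_components[OF assms]
  define G where "G p \<psi> = connv mu eta delta eps (snd p)
      (map (\<lambda>i. \<psi> (Inl i)) (sorted_list_of_set {i. Inl i \<in> fst p}))
      (map (\<lambda>j. \<psi> (Inr j)) (sorted_list_of_set {j. Inr j \<in> fst p}))
      * (\<Prod>x\<in>fst p. probe t x (\<psi> x))" for p \<psi>
  have probes: "prod_list (map2 (probe t) (boundary_list n m) (map \<psi> (boundary_list n m)))
      = (\<Prod>p\<in>P. \<Prod>x\<in>fst p. probe t x (\<psi> x))" for \<psi>
  proof -
    have "prod_list (map2 (probe t) (boundary_list n m) (map \<psi> (boundary_list n m)))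
        = (\<Prod>x\<in>bnd n m. probe t x (\<psi> x))"
      by (simp add: prod_list_map2_map_distinct distinct_boundary_list set_boundary_list)
    also have "\<dots> = (\<Prod>p\<in>P. \<Prod>x\<in>fst p. probe t x (\<psi> x))"
      unfolding components(2)[symmetric] using components(1,5,3) by (rule prod.UNION_disjoint)
    finally show ?thesis .
  qed
  have local: "G p \<phi> = G p \<phi>'" if "p \<in> P" "\<And>x. x \<in> fst p \<Longrightarrow> \<phi> x = \<phi>' x" for p \<phi> \<phi>'
    using that components(5) finite_vimageI[of "fst p" Inl] finite_vimageI[of "fst p" Inr]
    by (auto simp: G_def vimage_def intro!: arg_cong2[where f = "(*)"] map_cong prod.cong
        arg_cong2[where f = "connv mu eta delta eps (snd p)"])
  define F where "F zs = FA_coeff mu eta delta eps (n, m, P, C) (drop n zs) (take n zs)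
      * prod_list (map2 (probe t) (boundary_list n m) zs)" for zs
  have F_map: "F (map \<psi> (boundary_list n m)) = (\<Prod>p\<in>P. G p \<psi>) * (\<Prod>g\<in>#C. closed_value g)" for \<psi>
    by (simp only: F_def FA_coeff_boundary_list[OF assms] probes)
       (simp add: G_def prod.distrib case_prod_unfold mult_ac)
  have "capped_value t (n, m, P, C) = (\<Sum>zs | length zs = length (boundary_list n m). F zs)"
    by (simp add: capped_value_def F_def length_boundary_list)
  also have "\<dots> = (\<Sum>\<psi>\<in>PiE (\<Union>(fst ` P)) (\<lambda>_. UNIV). F (map \<psi> (boundary_list n m)))"
    using sum_PiE_map_distinct[OF distinct_boundary_list, of F n m]
    by (simp add: set_boundary_list components(2))
  also have "\<dots> = (\<Sum>\<psi>\<in>PiE (\<Union>(fst ` P)) (\<lambda>_. UNIV). \<Prod>p\<in>P. G p \<psi>) * (\<Prod>g\<in>#C. closed_value g)"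
    by (simp add: F_map sum_distrib_right)
  also have "\<dots> = (\<Prod>p\<in>P. closed_value (snd p + (\<Sum>x\<in>fst p. t x))) * (\<Prod>g\<in>#C. closed_value g)"
    using components(5)
    by (simp only: sum_PiE_UNION_prod[OF components(1,5,3) local]) (simp add: G_def sum_PiE_connv_probe)
  also have "\<dots> = (\<Prod>g\<in>#capped_genera t (n, m, P, C). closed_value g)"
    by (simp add: capped_genera_def prod_unfold_prod_mset multiset.map_comp comp_def case_prod_unfold)
  finally show ?thesis .
qed

end

section \<open>Capping with binary weights is injective\<close>

definition boundary_weight :: "nat \<Rightarrow> nat + nat \<Rightarrow> nat" where
  "boundary_weight N x = N * 2 ^ sum_encode x"

lemma sum_boundary_weight: "(\<Sum>x\<in>B. boundary_weight N x) = N * set_encode (sum_encode ` B)"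
  by (simp add: boundary_weight_def set_encode_def sum_distrib_left sum.reindex[OF inj_sum_encode])

definition component_code :: "nat \<Rightarrow> (nat + nat) set \<times> nat \<Rightarrow> nat" where
  "component_code N p = snd p + N * set_encode (sum_encode ` fst p)"

lemma capped_genera_boundary_weight:
  "capped_genera (boundary_weight N) (n, m, P, C) = image_mset (component_code N) (mset_set P) + C"
  by (simp add: capped_genera_def sum_boundary_weight component_code_def[abs_def] case_prod_unfold)

lemma inj_on_component_code: "inj_on (component_code N) {p. finite (fst p) \<and> snd p < N}"
proof (rule inj_onI)
  fix p q
  assume p: "p \<in> {p. finite (fst p) \<and> snd p < N}" and q: "q \<in> {p. finite (fst p) \<and> snd p < N}"
    and eq: "component_code N p = component_code N q"
  have "snd p = snd q"
    using arg_cong[OF eq, of "\<lambda>c. c mod N"] p q by (simp add: component_code_def)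
  moreover have "set_encode (sum_encode ` fst p) = set_encode (sum_encode ` fst q)"
    using arg_cong[OF eq, of "\<lambda>c. c div N"] p q by (simp add: component_code_def)
  ultimately show "p = q"
    using p q by (simp add: set_encode_eq inj_image_eq_iff[OF inj_sum_encode] prod_eq_iff)
qed

lemma component_code_ge:
  assumes "finite (fst p)" and "fst p \<noteq> {}"
  shows "N \<le> component_code N p"
proof -
  have "set_encode (sum_encode ` fst p) \<noteq> 0"
    using set_encode_eq[of "sum_encode ` fst p" "{}"] assms by simp
  then have "N \<le> N * set_encode (sum_encode ` fst p)"
    by (cases "set_encode (sum_encode ` fst p)") simp_all
  then show ?thesis
    unfolding component_code_def by linarith
qed

lemma capped_genera_boundary_weight_inj:
  assumes K: "is_arrow (n, m, P, C)" and L: "is_arrow (n', m', P', C')"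
    and bound_P: "\<forall>p\<in>P \<union> P'. snd p < N" and bound_C: "set_mset (C + C') \<subseteq> {..<N}"
    and eq: "capped_genera (boundary_weight N) (n, m, P, C) = capped_genera (boundary_weight N) (n', m', P', C')"
  shows "P = P' \<and> C = C'"
proof -
  have finite: "finite P" "finite P'"
    using is_arrow_components(1)[OF K] is_arrow_components(1)[OF L] .
  have components: "finite (fst p)" "fst p \<noteq> {}" if "p \<in> P \<union> P'" for p
    using that is_arrow_components(4,5)[OF K] is_arrow_components(4,5)[OF L] by blast+
  have "component_code N ` P = set_mset (image_mset (component_code N) (mset_set P) + C) \<inter> {N..}"
    and "component_code N ` P' = set_mset (image_mset (component_code N) (mset_set P') + C') \<inter> {N..}"
    using component_code_ge[OF components] bound_C finite by auto
  with eq have "component_code N ` P = component_code N ` P'"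
    by (simp add: capped_genera_boundary_weight)
  moreover have "inj_on (component_code N) (P \<union> P')"
    using components(1) bound_P by (intro inj_on_subset[OF inj_on_component_code]) auto
  ultimately have "P = P'"
    by (simp add: inj_on_image_eq_iff)
  with eq show ?thesis
    by (simp add: capped_genera_boundary_weight)
qed

lemma tensor_list_closed_surfaces: "tensor_list (map (\<lambda>k. E 0 k 0) ks) = (0, 0, {}, mset ks)"
  by (induction ks) (auto simp: tensor_list_def cunit_def E_def)

lemma (in comm_frobenius_algebra) FA_eq_closed_surfaces_iff:
  "FA_eq mu eta delta eps (tensor_list (map (\<lambda>k. E 0 k 0) ks)) (tensor_list (map (\<lambda>l. E 0 l 0) ls))
   \<longleftrightarrow> (\<Prod>g\<in>#mset ks. closed_value g) = (\<Prod>g\<in>#mset ls. closed_value g)"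
  by (simp add: tensor_list_closed_surfaces FA_eq_def connv_closed)

lemma ex_sorted_desc_mset: "\<exists>xs. sorted_wrt (\<ge>) xs \<and> mset xs = M"
  for M :: "'a::linorder multiset"
proof -
  obtain xs where "mset xs = M"
    using ex_mset by blast
  then show ?thesis
    by (intro exI[of _ "rev (sort xs)"]) (simp add: sorted_wrt_rev)
qed

theorem proposition4:
  fixes mu delta :: "'b::finite \<Rightarrow> 'b \<Rightarrow> 'b \<Rightarrow> 'k::field"
    and eta eps :: "'b \<Rightarrow> 'k"
    and K L :: cob
  assumes "comm_frobenius mu eta delta eps"
    and "card (UNIV :: 'b set) > 1"
    and "is_arrow K" and "is_arrow L"
    and "K \<noteq> L"
    and "FA_eq mu eta delta eps K L"
  shows "\<exists>ks ls. sorted_wrt (\<ge>) ks \<and> sorted_wrt (\<ge>) ls \<and> ks \<noteq> ls \<and>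
           FA_eq mu eta delta eps (tensor_list (map (\<lambda>k. E 0 k 0) ks))
                                  (tensor_list (map (\<lambda>l. E 0 l 0) ls))"
proof -
  interpret comm_frobenius_algebra mu delta eta eps
    using assms(1) by unfold_locales
  obtain n m P C where K: "K = (n, m, P, C)"
    by (cases K)
  obtain P' C' where L: "L = (n, m, P', C')"
    using assms(6) K by (cases L) (simp add: FA_eq_def)
  define N where "N = Suc (Max (snd ` (P \<union> P') \<union> set_mset (C + C')))"
  have "finite P" "finite P'"
    using is_arrow_components(1) assms(3,4) K L by blast+
  then have "\<forall>p\<in>P \<union> P'. snd p < N" "set_mset (C + C') \<subseteq> {..<N}"
    unfolding N_def by (auto intro!: le_imp_less_Suc Max_ge)
  then have "capped_genera (boundary_weight N) K \<noteq> capped_genera (boundary_weight N) L"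
    using capped_genera_boundary_weight_inj assms(3-5) K L by blast
  moreover have "(\<Prod>g\<in>#capped_genera (boundary_weight N) K. closed_value g)
      = (\<Prod>g\<in>#capped_genera (boundary_weight N) L. closed_value g)"
    using capped_value_cong[OF assms(6), of "boundary_weight N"] assms(3,4)
    by (simp add: K L capped_value_arrow)
  moreover obtain ks ls where "sorted_wrt (\<ge>) ks" "mset ks = capped_genera (boundary_weight N) K"
    and "sorted_wrt (\<ge>) ls" "mset ls = capped_genera (boundary_weight N) L"
    using ex_sorted_desc_mset by metis
  ultimately show ?thesis
    by (metis FA_eq_closed_surfaces_iff)
qed

end
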